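(* Let $P$ be a finite lattice and $f\in\mathcal{L}_P$. If $s$ is a minimal element of $\mathcal{S}_f=\{s\in\mathcal{L}_P: f+s=1\}$, then $s$ is prime, i.e. $P\setminus\Phi s$ is closed under $\wedge$.
   Context: $P$ is a finite lattice with greatest element $\hat p$. $\mathcal{L}_P$ is the set of maps $f:P\to P$ satisfying (A.1) $a\le f(a)$; (A.2) $a\le b\Rightarrow f(a)\le f(b)$; (A.3) $f(f(a))=f(a)$, ordered pointwise; it is a lattice with join $+$ and greatest element $1:a\mapsto\hat p$. $\Phi f=\{a:f(a)=a\}$; one has $f+s=1$ iff $\Phi f\cap\Phi s=\{\hat p\}$. A map is prime if its set of non-fixed points is closed under $\wedge$. *)

theory Defs
  imports Main
begin

text \<open>The lattice P is a finite type of class lattice with a top element.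
  Closure operators on P (the set L_P), ordered pointwise (HOL's le_fun order).\<close>

definition closure_op :: "('a::{finite,lattice,order_top} \<Rightarrow> 'a) \<Rightarrow> bool" where
  "closure_op f \<longleftrightarrow> (\<forall>a. a \<le> f a) \<and> (\<forall>a b. a \<le> b \<longrightarrow> f a \<le> f b) \<and> (\<forall>a. f (f a) = f a)"

definition LP :: "('a::{finite,lattice,order_top} \<Rightarrow> 'a) set" where
  "LP = {f. closure_op f}"

definition joinL :: "('a::{finite,lattice,order_top} \<Rightarrow> 'a) \<Rightarrow> ('a \<Rightarrow> 'a) \<Rightarrow> ('a \<Rightarrow> 'a)" where
  "joinL f s = (LEAST h. h \<in> LP \<and> f \<le> h \<and> s \<le> h)"

definition oneL :: "'a::{finite,lattice,order_top} \<Rightarrow> 'a" where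
  "oneL = (\<lambda>a. top)"

definition Phi :: "('a \<Rightarrow> 'a) \<Rightarrow> 'a set" where
  "Phi f = {a. f a = a}"

definition Sf :: "('a::{finite,lattice,order_top} \<Rightarrow> 'a) \<Rightarrow> ('a \<Rightarrow> 'a) set" where
  "Sf f = {s \<in> LP. joinL f s = oneL}"

definition prime_map :: "('a::{finite,lattice,order_top} \<Rightarrow> 'a) \<Rightarrow> bool" where
  "prime_map s \<longleftrightarrow> (\<forall>a b. a \<notin> Phi s \<longrightarrow> b \<notin> Phi s \<longrightarrow> inf a b \<notin> Phi s)"

end

theory Submission
  imports Defs
begin

text \<open>Let \<open>x\<close> be a non-fixed point of the minimal \<open>s\<close>. Truncating \<open>s\<close> below \<open>x\<close> to \<open>z \<mapsto> x \<sqinter> s z\<close>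
  gives a strictly smaller closure operator, which by minimality has a non-top fixed point \<open>u\<close>
  in common with \<open>f\<close>; necessarily \<open>u = x \<sqinter> s u\<close> with \<open>u\<close> not fixed by \<open>s\<close>. For non-fixed
  \<open>a\<close>, \<open>b\<close> with \<open>a \<sqinter> b\<close> fixed, the corresponding \<open>u \<sqinter> v = (a \<sqinter> b) \<sqinter> s u \<sqinter> s v\<close> would be a
  common fixed point of \<open>f\<close> and \<open>s\<close> other than top, contradicting \<open>f + s = 1\<close>.\<close>

lemma Phi_iff [simp]: "a \<in> Phi f \<longleftrightarrow> f a = a"
  by (simp add: Phi_def)

lemma closure_op_extensive: "closure_op f \<Longrightarrow> a \<le> f a"
  unfolding closure_op_def by auto

lemma closure_op_mono: "closure_op f \<Longrightarrow> a \<le> b \<Longrightarrow> f a \<le> f b"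
  unfolding closure_op_def by auto

lemma closure_op_idem: "closure_op f \<Longrightarrow> f (f a) = f a"
  unfolding closure_op_def by auto

lemma closure_op_top: "closure_op f \<Longrightarrow> f top = top"
  using closure_op_extensive top_unique by metis

lemma closure_op_le_fixed: "closure_op f \<Longrightarrow> f b = b \<Longrightarrow> a \<le> b \<Longrightarrow> f a \<le> b"
  using closure_op_mono by metis

lemma closure_op_fixed_inf:
  assumes "closure_op f" "f a = a" "f b = b"
  shows "f (inf a b) = inf a b"
proof (rule antisym)
  show "f (inf a b) \<le> inf a b"
    using assms closure_op_le_fixed[OF assms(1)] by simp
qed (rule closure_op_extensive[OF assms(1)])

lemma top_mem_Phi_Int: "closure_op f \<Longrightarrow> closure_op s \<Longrightarrow> top \<in> Phi f \<inter> Phi s"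
  using closure_op_top by auto

lemma inf_mem_Phi_Int:
  "closure_op f \<Longrightarrow> closure_op s \<Longrightarrow> a \<in> Phi f \<inter> Phi s \<Longrightarrow> b \<in> Phi f \<inter> Phi s
    \<Longrightarrow> inf a b \<in> Phi f \<inter> Phi s"
  using closure_op_fixed_inf by auto

definition moore_closure :: "'a::{finite,lattice,order_top} set \<Rightarrow> 'a \<Rightarrow> 'a" where
  "moore_closure M z = Inf_fin {w \<in> M. z \<le> w}"

context
  fixes M :: "'a::{finite,lattice,order_top} set"
  assumes top_mem: "top \<in> M" and inf_mem: "\<And>a b. a \<in> M \<Longrightarrow> b \<in> M \<Longrightarrow> inf a b \<in> M"
begin

lemma Inf_fin_mem: "A \<subseteq> M \<Longrightarrow> A \<noteq> {} \<Longrightarrow> Inf_fin A \<in> M"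
proof (induction A rule: infinite_finite_induct)
  case (insert a A)
  then show ?case by (cases "A = {}") (auto intro: inf_mem)
qed simp_all

lemma moore_closure_mem: "moore_closure M z \<in> M"
  unfolding moore_closure_def using top_mem by (intro Inf_fin_mem) auto

lemma moore_closure_upper: "z \<le> moore_closure M z"
  unfolding moore_closure_def using top_mem by (intro Inf_fin.boundedI) auto

lemma moore_closure_least: "w \<in> M \<Longrightarrow> z \<le> w \<Longrightarrow> moore_closure M z \<le> w"
  unfolding moore_closure_def by (intro Inf_fin.coboundedI) auto

lemma closure_op_moore_closure: "closure_op (moore_closure M)"
  unfolding closure_op_def
  using moore_closure_upper moore_closure_least moore_closure_mem
  by (metis antisym order_trans)

lemma Phi_moore_closure: "Phi (moore_closure M) = M"
proof (intro set_eqI iffI)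
  show "w \<in> M" if "w \<in> Phi (moore_closure M)" for w
    using that moore_closure_mem by (metis Phi_iff)
  show "w \<in> Phi (moore_closure M)" if "w \<in> M" for w
    using that moore_closure_least[OF that order_refl] moore_closure_upper by (simp add: antisym)
qed

end

lemma joinL_eq_moore_closure:
  fixes f s :: "'a::{finite,lattice,order_top} \<Rightarrow> 'a"
  assumes f: "closure_op f" and s: "closure_op s"
  shows "joinL f s = moore_closure (Phi f \<inter> Phi s)"
  unfolding joinL_def
proof (rule Least_equality)
  let ?M = "Phi f \<inter> Phi s"
  note top = top_mem_Phi_Int[OF f s] and inf = inf_mem_Phi_Int[OF f s]
  note upper = moore_closure_upper[of ?M, OF top inf]
    and mem = moore_closure_mem[of ?M, OF top inf]
    and least = moore_closure_least[of ?M, OF top inf]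
  have "f z \<le> moore_closure ?M z" "s z \<le> moore_closure ?M z" for z
    using mem[of z] closure_op_le_fixed[OF f _ upper] closure_op_le_fixed[OF s _ upper] by simp_all
  then have "f \<le> moore_closure ?M" "s \<le> moore_closure ?M" by (simp_all add: le_fun_def)
  then show "moore_closure ?M \<in> LP \<and> f \<le> moore_closure ?M \<and> s \<le> moore_closure ?M"
    using closure_op_moore_closure[of ?M, OF top inf] by (simp add: LP_def)
  show "moore_closure ?M \<le> h" if "h \<in> LP \<and> f \<le> h \<and> s \<le> h" for h
  proof -
    have h: "closure_op h" and fh: "f \<le> h" and sh: "s \<le> h" using that by (auto simp: LP_def)
    have "h z \<in> ?M" for z
      using le_funD[OF fh, of "h z"] le_funD[OF sh, of "h z"] closure_op_idem[OF h]
        closure_op_extensive[OF f] closure_op_extensive[OF s]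
      by (auto intro: antisym)
    then show ?thesis
      unfolding le_fun_def using least closure_op_extensive[OF h] by blast
  qed
qed

lemma joinL_eq_oneL_iff:
  fixes f s :: "'a::{finite,lattice,order_top} \<Rightarrow> 'a"
  assumes f: "closure_op f" and s: "closure_op s"
  shows "joinL f s = oneL \<longleftrightarrow> Phi f \<inter> Phi s = {top}"
proof -
  let ?M = "Phi f \<inter> Phi s"
  note top = top_mem_Phi_Int[OF f s] and inf = inf_mem_Phi_Int[OF f s]
  have "Phi oneL = {top}" by (auto simp: oneL_def)
  moreover have "moore_closure {top} = (oneL :: 'a \<Rightarrow> 'a)"
  proof
    fix z :: 'a
    have "{w \<in> {top}. z \<le> w} = {top}" by auto
    then show "moore_closure {top} z = oneL z" by (simp add: moore_closure_def oneL_def)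
  qed
  ultimately show ?thesis
    using joinL_eq_moore_closure[OF f s] Phi_moore_closure[of ?M, OF top inf] by metis
qed

definition truncate_below :: "('a::{finite,lattice,order_top} \<Rightarrow> 'a) \<Rightarrow> 'a \<Rightarrow> 'a \<Rightarrow> 'a" where
  "truncate_below s x z = (if z \<le> x then inf x (s z) else s z)"

lemma closure_op_truncate_below:
  assumes s: "closure_op s"
  shows "closure_op (truncate_below s x)"
  unfolding closure_op_def
proof (intro conjI allI impI)
  fix a show "a \<le> truncate_below s x a"
    using closure_op_extensive[OF s] by (simp add: truncate_below_def)
next
  fix a b :: 'a assume ab: "a \<le> b"
  then have sab: "s a \<le> s b" by (rule closure_op_mono[OF s])
  show "truncate_below s x a \<le> truncate_below s x b"
  proof (cases "b \<le> x")
    case True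
    then show ?thesis using ab sab by (auto simp: truncate_below_def le_infI2)
  next
    case False
    then show ?thesis using sab by (auto simp: truncate_below_def le_infI2)
  qed
next
  fix a
  show "truncate_below s x (truncate_below s x a) = truncate_below s x a"
  proof (cases "a \<le> x")
    case True
    have "a \<le> inf x (s a)" using True closure_op_extensive[OF s] by simp
    then have "s (inf x (s a)) = s a"
      using closure_op_mono[OF s] closure_op_idem[OF s] closure_op_le_fixed[OF s]
      by (metis antisym inf_le2)
    then show ?thesis using True by (simp add: truncate_below_def)
  next
    case False
    then have "\<not> s a \<le> x" using closure_op_extensive[OF s] order_trans by metis
    then show ?thesis using False closure_op_idem[OF s] by (simp add: truncate_below_def)
  qed
qed

lemma truncate_below_less:
  assumes s: "closure_op s" and x: "s x \<noteq> x"
  shows "truncate_below s x < s"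
proof -
  have "truncate_below s x \<le> s" by (simp add: le_fun_def truncate_below_def)
  moreover have "truncate_below s x x = x"
    using closure_op_extensive[OF s] by (simp add: truncate_below_def inf_absorb1)
  ultimately show ?thesis using x by (metis order_less_le)
qed

lemma minimal_complement_witness:
  fixes f s :: "'a::{finite,lattice,order_top} \<Rightarrow> 'a"
  assumes f: "closure_op f" and s: "closure_op s"
    and fs: "Phi f \<inter> Phi s = {top}"
    and minimal: "\<forall>t \<in> Sf f. \<not> t < s"
    and x: "s x \<noteq> x"
  obtains u where "f u = u" "s u \<noteq> u" "u = inf x (s u)"
proof -
  let ?t = "truncate_below s x"
  have t: "closure_op ?t" by (rule closure_op_truncate_below[OF s])
  have "?t \<notin> Sf f" using minimal truncate_below_less[OF s x] by auto
  then have "Phi f \<inter> Phi ?t \<noteq> {top}"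
    using t joinL_eq_oneL_iff[OF f t] by (auto simp: Sf_def LP_def)
  moreover have "top \<in> Phi f \<inter> Phi ?t" by (rule top_mem_Phi_Int[OF f t])
  ultimately obtain u where uf: "u \<in> Phi f" and "u \<in> Phi ?t" and "u \<noteq> top" by blast
  then have ut: "?t u = u" by simp
  have su: "s u \<noteq> u"
  proof
    assume "s u = u"
    with uf have "u \<in> Phi f \<inter> Phi s" by simp
    with fs \<open>u \<noteq> top\<close> show False by blast
  qed
  have "u \<le> x"
  proof (rule ccontr)
    assume "\<not> u \<le> x"
    then have "s u = u" using ut by (simp add: truncate_below_def)
    then show False using su by contradiction
  qed
  then have "u = inf x (s u)" using ut by (simp add: truncate_below_def)
  with uf su show thesis using that by simp
qed

theorem mainTheorem13:
  fixes f s :: "'a::{finite,lattice,order_top} \<Rightarrow> 'a"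
  assumes "f \<in> LP"
    and "s \<in> Sf f"
    and "\<forall>t \<in> Sf f. \<not> (t < s)"
  shows "prime_map s"
  unfolding prime_map_def
proof (intro allI impI)
  have f: "closure_op f" using assms(1) by (simp add: LP_def)
  have s: "closure_op s" and "joinL f s = oneL" using assms(2) by (auto simp: Sf_def LP_def)
  then have fs: "Phi f \<inter> Phi s = {top}" using joinL_eq_oneL_iff[OF f s] by simp
  fix a b assume a: "a \<notin> Phi s" and b: "b \<notin> Phi s"
  obtain u where u: "f u = u" "s u \<noteq> u" "u = inf a (s u)"
    by (rule minimal_complement_witness[OF f s fs assms(3)]) (use a in simp)
  obtain v where v: "f v = v" "s v \<noteq> v" "v = inf b (s v)"
    by (rule minimal_complement_witness[OF f s fs assms(3)]) (use b in simp)
  show "inf a b \<notin> Phi s"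
  proof
    assume ab: "inf a b \<in> Phi s"
    have "inf u v = inf (inf a (s u)) (inf b (s v))"
      using arg_cong2[OF u(3) v(3), of inf] .
    also have "\<dots> = inf (inf a b) (inf (s u) (s v))" by (simp add: inf_aci)
    finally have "s (inf u v) = inf u v"
      using ab closure_op_fixed_inf[OF s] closure_op_idem[OF s] by simp
    moreover have "f (inf u v) = inf u v" by (rule closure_op_fixed_inf[OF f u(1) v(1)])
    ultimately have "inf u v \<in> Phi f \<inter> Phi s" by simp
    then have "inf u v = top" using fs by blast
    then have "u = top" by (metis inf_le1 top_unique)
    then show False using u(2) closure_op_top[OF s] by simp
  qed
qed

end
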